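(* Let $n\ge 1$ and $N=\binom{2n}{n}$. There exists a listing $S_0,S_1,\ldots,S_{N-1}$ of all $n$-element subsets of $\{1,2,\ldots,2n\}$ such that (i) $S_{i+N/2}=\{1,\ldots,2n\}\setminus S_i$ for all $0\le i<N/2$, and (ii) for every $i$ (indices taken modulo $N$), $S_{i+1}=(S_i\setminus\{a\})\cup\{b\}$ for some $a\in S_i$, $b\notin S_i$, such that either every integer strictly between $a$ and $b$ belongs to $S_i$, or no integer strictly between $a$ and $b$ belongs to $S_i$.
   Context: Condition (ii) is the "complementary strong minimal change property": in terms of incidence vectors, consecutive vectors differ in exactly two bit positions, and the bits strictly between these two positions are all $1$ or all $0$. Condition (i) says the code is complementary. *)

theory Defs
  imports Main
begin

definition strong_min_change :: "nat set \<Rightarrow> nat set \<Rightarrow> bool" where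
  "strong_min_change S T \<longleftrightarrow>
     (\<exists>a b. a \<in> S \<and> b \<notin> S \<and> T = (S - {a}) \<union> {b} \<and>
        ((\<forall>c. min a b < c \<and> c < max a b \<longrightarrow> c \<in> S) \<or>
         (\<forall>c. min a b < c \<and> c < max a b \<longrightarrow> c \<notin> S)))"

end

theory Submission
  imports Defs
begin

text \<open>For s \<ge> 1 and s + k \<le> m, the k-subsets of {1..m} admit a Hamiltonian path of strong
minimal changes from the block of the k largest elements to that block shifted down by s. It is
built by recursion on m: first the sets containing m, from a path through the (k-1)-subsets of
{1..m-1}, then the sets avoiding m; the halves are joined by moving m down to the first free
position above the last block. For m = 2n-1, k = n-1 and s = n the path runs from {n+1..2n-1}
to {1..n-1}. Adding 2n to its sets lists the n-subsets of {1..2n} that contain 2n, and their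
complements, in the same order, are the remaining ones. Complementation preserves strong minimal
changes, and both junctions of the resulting cycle are the move of 2n down to n or its
complement.\<close>

lemma strong_min_change_sym:
  assumes "strong_min_change S T"
  shows "strong_min_change T S"
proof -
  obtain a b where ab: "a \<in> S" "b \<notin> S" "T = S - {a} \<union> {b}"
    and btw: "(\<forall>c. min a b < c \<and> c < max a b \<longrightarrow> c \<in> S) \<or>
              (\<forall>c. min a b < c \<and> c < max a b \<longrightarrow> c \<notin> S)"
    using assms unfolding strong_min_change_def by blast
  show ?thesis
    unfolding strong_min_change_def
    by (rule exI[of _ b], rule exI[of _ a]) (use ab btw in \<open>auto simp: min_def max_def\<close>)
qed

lemma strong_min_change_insert_greater:
  assumes "strong_min_change S T" and "\<forall>x \<in> S \<union> T. x < M"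
  shows "strong_min_change (insert M S) (insert M T)"
proof -
  obtain a b where ab: "a \<in> S" "b \<notin> S" "T = S - {a} \<union> {b}"
    and btw: "(\<forall>c. min a b < c \<and> c < max a b \<longrightarrow> c \<in> S) \<or>
              (\<forall>c. min a b < c \<and> c < max a b \<longrightarrow> c \<notin> S)"
    using assms(1) unfolding strong_min_change_def by blast
  have M: "a < M" "b < M" using ab assms(2) by auto
  show ?thesis
    unfolding strong_min_change_def
    by (rule exI[of _ a], rule exI[of _ b]) (use ab btw M in \<open>auto simp: min_def max_def\<close>)
qed

lemma strong_min_change_complement:
  assumes "strong_min_change S T" and "S \<subseteq> {1..u}" and "T \<subseteq> {1..u}"
  shows "strong_min_change ({1..u} - S) ({1..u} - T)"
proof -
  obtain a b where ab: "a \<in> S" "b \<notin> S" "T = S - {a} \<union> {b}"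
    and btw: "(\<forall>c. min a b < c \<and> c < max a b \<longrightarrow> c \<in> S) \<or>
              (\<forall>c. min a b < c \<and> c < max a b \<longrightarrow> c \<notin> S)"
    using assms(1) unfolding strong_min_change_def by blast
  have ab_u: "a \<in> {1..u}" "b \<in> {1..u}" using ab assms(2,3) by auto
  \<comment> \<open>The integers between a and b lie in {1..u}, so complementation swaps the two alternatives.\<close>
  show ?thesis
    unfolding strong_min_change_def
    by (rule exI[of _ b], rule exI[of _ a])
      (use ab btw ab_u in \<open>auto simp: min.commute max.commute\<close>)
qed

lemma strong_min_change_lower_max:
  assumes "\<forall>x \<in> X. x < c" and "c < M"
  shows "strong_min_change (insert M X) (insert c X)"
  unfolding strong_min_change_def
  by (rule exI[of _ M], rule exI[of _ c]) (use assms in \<open>auto simp: min_def max_def\<close>)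

lemma successively_smc_insert_greater:
  assumes "successively strong_min_change L" and "\<forall>A \<in> set L. \<forall>x \<in> A. x < M"
  shows "successively strong_min_change (map (insert M) L)"
  unfolding successively_map
  by (rule successively_mono[OF assms(1)]) (use assms(2) strong_min_change_insert_greater in blast)

lemma successively_smc_complement:
  assumes "successively strong_min_change L" and "\<forall>A \<in> set L. A \<subseteq> {1..u}"
  shows "successively strong_min_change (map (\<lambda>A. {1..u} - A) L)"
  unfolding successively_map
  by (rule successively_mono[OF assms(1)]) (use assms(2) strong_min_change_complement in blast)

definition ksubsets :: "nat \<Rightarrow> nat \<Rightarrow> nat set set" where
  "ksubsets m k = {A. A \<subseteq> {1..m} \<and> card A = k}"

lemma card_ksubsets: "card (ksubsets m k) = m choose k"
  unfolding ksubsets_def using n_subsets[of "{1..m}" k] by simp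

lemma ksubsets_zero: "ksubsets m 0 = {{}}"
  unfolding ksubsets_def using finite_subset[of _ "{1..m}"] by auto

lemma ksubsets_full: "ksubsets m m = {{1..m}}"
proof -
  have "A = {1..m}" if "A \<subseteq> {1..m}" "card A = m" for A
    using card_subset_eq[OF _ that(1)] that(2) by simp
  then show ?thesis unfolding ksubsets_def by auto
qed

lemma ksubsets_Suc:
  assumes "0 < k"
  shows "ksubsets (Suc m) k = insert (Suc m) ` ksubsets m (k - 1) \<union> ksubsets m k"
proof (intro set_eqI iffI)
  fix A assume A: "A \<in> ksubsets (Suc m) k"
  then have fin: "finite A" unfolding ksubsets_def using finite_subset by blast
  show "A \<in> insert (Suc m) ` ksubsets m (k - 1) \<union> ksubsets m k"
  proof (cases "Suc m \<in> A")
    case True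
    then have "A = insert (Suc m) (A - {Suc m})" and "A - {Suc m} \<in> ksubsets m (k - 1)"
      using A fin by (auto simp: ksubsets_def le_Suc_eq subset_iff)
    then show ?thesis by blast
  next
    case False
    then show ?thesis using A by (auto simp: ksubsets_def le_Suc_eq subset_iff)
  qed
next
  fix A assume "A \<in> insert (Suc m) ` ksubsets m (k - 1) \<union> ksubsets m k"
  then show "A \<in> ksubsets (Suc m) k"
  proof
    assume "A \<in> insert (Suc m) ` ksubsets m (k - 1)"
    then obtain B where "B \<subseteq> {1..m}" "card B = k - 1" "A = insert (Suc m) B"
      by (auto simp: ksubsets_def)
    moreover have "finite B" "Suc m \<notin> B" using \<open>B \<subseteq> {1..m}\<close> finite_subset by auto
    ultimately show ?thesis using assms by (auto simp: ksubsets_def)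
  qed (auto simp: ksubsets_def)
qed

lemma ksubsets_complement:
  assumes "k \<le> m"
  shows "(\<lambda>A. {1..m} - A) ` ksubsets m k = ksubsets m (m - k)"
proof -
  have compl: "{1..m} - A \<in> ksubsets m (m - j)" if "A \<in> ksubsets m j" for A j
    using that by (auto simp: ksubsets_def card_Diff_subset finite_subset)
  have "B \<in> (\<lambda>A. {1..m} - A) ` ksubsets m k" if "B \<in> ksubsets m (m - k)" for B
  proof
    show "B = {1..m} - ({1..m} - B)" using that by (auto simp: ksubsets_def)
    show "{1..m} - B \<in> ksubsets m k" using compl[OF that] assms by simp
  qed
  then show ?thesis using compl by blast
qed

lemma inj_on_insert_ksubsets: "inj_on (insert (Suc m)) (ksubsets m k)"
proof (rule inj_onI)
  fix A B assume "A \<in> ksubsets m k" "B \<in> ksubsets m k" "insert (Suc m) A = insert (Suc m) B"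
  moreover have "Suc m \<notin> A" "Suc m \<notin> B" using calculation(1,2) by (auto simp: ksubsets_def)
  ultimately show "A = B" by (simp add: insert_ident)
qed

definition smc_path :: "nat \<Rightarrow> nat \<Rightarrow> nat set \<Rightarrow> nat set \<Rightarrow> nat set list \<Rightarrow> bool" where
  "smc_path m k X Y L \<longleftrightarrow> L \<noteq> [] \<and> hd L = X \<and> last L = Y \<and>
     distinct L \<and> set L = ksubsets m k \<and> successively strong_min_change L"

lemma smc_path_zero: "smc_path m 0 {} {} [{}]"
  by (simp add: smc_path_def ksubsets_zero)

lemma smc_path_full: "smc_path m m {1..m} {1..m} [{1..m}]"
  by (simp add: smc_path_def ksubsets_full)

lemma smc_path_rev:
  assumes "smc_path m k X Y L"
  shows "smc_path m k Y X (rev L)"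
  using assms unfolding smc_path_def
  by (auto simp: hd_rev last_rev intro: successively_mono strong_min_change_sym)

lemma smc_path_append_top:
  assumes "0 < k"
    and A: "smc_path m (k - 1) X Y A" and B: "smc_path m k Y' Z B"
    and J: "strong_min_change (insert (Suc m) Y) Y'"
  shows "smc_path (Suc m) k (insert (Suc m) X) Z (map (insert (Suc m)) A @ B)"
proof -
  have A_sub: "\<forall>C \<in> set A. C \<subseteq> {1..m}" and B_sub: "\<forall>C \<in> set B. C \<subseteq> {1..m}"
    using A B by (auto simp: smc_path_def ksubsets_def)
  have "successively strong_min_change (map (insert (Suc m)) A)"
    using A A_sub by (intro successively_smc_insert_greater) (force simp: smc_path_def)+
  moreover have "distinct (map (insert (Suc m)) A)"
    using A inj_on_insert_ksubsets by (auto simp: smc_path_def distinct_map)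
  moreover have "set (map (insert (Suc m)) A) \<inter> set B = {}"
    using B_sub by auto
  ultimately show ?thesis
    using A B J ksubsets_Suc[OF \<open>0 < k\<close>]
    by (auto simp: smc_path_def successively_append_iff hd_map last_map)
qed

definition top_block :: "nat \<Rightarrow> nat \<Rightarrow> nat set" where
  "top_block j k = {j - k + 1..j}"

lemma top_block_zero [simp]: "top_block j 0 = {}"
  by (simp add: top_block_def)

lemma top_block_insert:
  assumes "0 < k" and "k \<le> j"
  shows "top_block j k = insert j (top_block (j - 1) (k - 1))"
  using assms by (auto simp: top_block_def)

lemma strong_min_change_top_block:
  assumes "0 < k" and "k \<le> j" and "j < M"
  shows "strong_min_change (insert M (top_block (j - 1) (k - 1))) (top_block j k)"
  unfolding top_block_insert[OF assms(1,2)]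
  by (rule strong_min_change_lower_max) (use assms(3) in \<open>auto simp: top_block_def\<close>)

fun shift_path :: "nat \<Rightarrow> nat \<Rightarrow> nat \<Rightarrow> nat set list" where
  "shift_path 0 k s = [{}]"
| "shift_path (Suc m) k s =
     (if k = 0 then [{}]
      else if s = 1 \<and> k = m then map (insert (Suc m)) (shift_path m (k - 1) 1) @ [{1..m}]
      else if s = 1 then map (insert (Suc m)) (shift_path m (k - 1) 2) @ rev (shift_path m k 1)
      else map (insert (Suc m)) (shift_path m (k - 1) 1) @ shift_path m k (s - 1))"

lemma smc_path_shift_path:
  assumes "k < m" and "1 \<le> s" and "s + k \<le> m"
  shows "smc_path m k (top_block m k) (top_block (m - s) k) (shift_path m k s)"
  using assms
proof (induction m arbitrary: k s)
  case 0
  then show ?case by simp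
next
  case (Suc m)
  have top: "insert (Suc m) (top_block m (k - 1)) = top_block (Suc m) k" if "0 < k"
    using top_block_insert[of k "Suc m"] that Suc.prems by simp
  consider (zero) "k = 0"
    | (one_full) "0 < k" "s = 1" "k = m"
    | (one) "0 < k" "s = 1" "k < m"
    | (more) "0 < k" "2 \<le> s"
    using Suc.prems by linarith
  then show ?case
  proof cases
    case zero
    then show ?thesis by (simp add: smc_path_zero)
  next
    case one_full
    have A: "smc_path m (k - 1) (top_block m (k - 1)) (top_block (m - 1) (k - 1))
               (shift_path m (k - 1) 1)"
      using Suc.IH one_full by simp
    have B: "smc_path m k {1..m} {1..m} [{1..m}]"
      using smc_path_full one_full by simp
    have full: "top_block m m = {1..m}" by (simp add: top_block_def)
    then have J: "strong_min_change (insert (Suc m) (top_block (m - 1) (k - 1))) {1..m}"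
      using strong_min_change_top_block[of k m "Suc m"] one_full by simp
    show ?thesis
      using smc_path_append_top[OF \<open>0 < k\<close> A B J] one_full top full by simp
  next
    case one
    have A: "smc_path m (k - 1) (top_block m (k - 1)) (top_block (m - 2) (k - 1))
               (shift_path m (k - 1) 2)"
      using Suc.IH Suc.prems one by simp
    have B: "smc_path m k (top_block (m - 1) k) (top_block m k) (rev (shift_path m k 1))"
      using smc_path_rev Suc.IH Suc.prems one by simp
    have J: "strong_min_change (insert (Suc m) (top_block (m - 2) (k - 1))) (top_block (m - 1) k)"
      using strong_min_change_top_block[of k "m - 1" "Suc m"] one by (simp add: numeral_2_eq_2)
    show ?thesis
      using smc_path_append_top[OF \<open>0 < k\<close> A B J] one top by simp
  next
    case more
    have A: "smc_path m (k - 1) (top_block m (k - 1)) (top_block (m - 1) (k - 1))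
               (shift_path m (k - 1) 1)"
      using Suc.IH Suc.prems more by simp
    have "m - (s - 1) = Suc m - s" using more by simp
    then have B: "smc_path m k (top_block m k) (top_block (Suc m - s) k) (shift_path m k (s - 1))"
      using Suc.IH[of k "s - 1"] Suc.prems more by simp
    have J: "strong_min_change (insert (Suc m) (top_block (m - 1) (k - 1))) (top_block m k)"
      using strong_min_change_top_block[of k m "Suc m"] Suc.prems more by simp
    show ?thesis
      using smc_path_append_top[OF \<open>0 < k\<close> A B J] Suc.prems more top by simp
  qed
qed

lemma complementary_smc_path:
  assumes "1 \<le> n"
    and P: "smc_path (2 * n - 1) (n - 1) X Y P"
    and J: "strong_min_change (insert (2 * n) Y) ({1..2 * n} - insert (2 * n) X)"
  defines "H \<equiv> map (insert (2 * n)) P"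
  shows "smc_path (2 * n) n (insert (2 * n) X) ({1..2 * n} - insert (2 * n) Y)
           (H @ map (\<lambda>A. {1..2 * n} - A) H)"
    and "strong_min_change ({1..2 * n} - insert (2 * n) Y) (insert (2 * n) X)"
proof -
  define m where "m = 2 * n - 1"
  have Suc_m: "Suc m = 2 * n" using assms(1) by (simp add: m_def)
  have P_ne: "P \<noteq> []" and set_P: "set P = ksubsets m (n - 1)"
    using P by (auto simp: smc_path_def m_def)
  have set_H: "set H = insert (Suc m) ` ksubsets m (n - 1)"
    using set_P by (simp add: H_def Suc_m)
  then have H_sub: "\<forall>A \<in> set H. A \<subseteq> {1..2 * n}"
    by (auto simp: ksubsets_def Suc_m[symmetric])
  have hd_H: "hd H = insert (2 * n) X" and last_H: "last H = insert (2 * n) Y"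
    using P P_ne by (auto simp: H_def smc_path_def hd_map last_map)
  have "(\<lambda>A. {1..2 * n} - A) ` set H = (\<lambda>A. {1..m} - A) ` ksubsets m (n - 1)"
    unfolding set_H image_image Suc_m[symmetric] by (intro image_cong) auto
  also have "\<dots> = ksubsets m n"
    using ksubsets_complement[of "n - 1" m] assms(1) by (simp add: m_def)
  finally have set_compl: "(\<lambda>A. {1..2 * n} - A) ` set H = ksubsets m n" .
  have "set (H @ map (\<lambda>A. {1..2 * n} - A) H) = ksubsets (2 * n) n"
    using set_H set_compl ksubsets_Suc[of n m] assms(1) by (simp add: Suc_m)
  moreover have "distinct (H @ map (\<lambda>A. {1..2 * n} - A) H)"
  proof -
    have "distinct H"
      using P inj_on_insert_ksubsets[of m "n - 1"] set_P
      by (simp add: H_def smc_path_def distinct_map Suc_m)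
    moreover have "inj_on (\<lambda>A. {1..2 * n} - A) (set H)"
      using H_sub by (intro inj_onI) blast
    moreover have "set H \<inter> (\<lambda>A. {1..2 * n} - A) ` set H = {}"
      using set_H by auto
    ultimately show ?thesis by (simp add: distinct_map)
  qed
  moreover have H_smc: "successively strong_min_change H"
    unfolding H_def
  proof (rule successively_smc_insert_greater)
    show "successively strong_min_change P" using P by (simp add: smc_path_def)
    show "\<forall>A \<in> set P. \<forall>x \<in> A. x < 2 * n"
      using set_P Suc_m by (force simp: ksubsets_def)
  qed
  moreover have "successively strong_min_change (map (\<lambda>A. {1..2 * n} - A) H)"
    using H_smc H_sub by (rule successively_smc_complement)
  ultimately show "smc_path (2 * n) n (insert (2 * n) X) ({1..2 * n} - insert (2 * n) Y)
           (H @ map (\<lambda>A. {1..2 * n} - A) H)"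
    using J P_ne hd_H last_H
    by (auto simp: smc_path_def successively_append_iff hd_map last_map H_def)
  have "H \<noteq> []" using P_ne by (simp add: H_def)
  then have X: "insert (2 * n) X \<subseteq> {1..2 * n}" and Y: "insert (2 * n) Y \<subseteq> {1..2 * n}"
    using H_sub hd_H last_H by (metis hd_in_set last_in_set)+
  have "strong_min_change ({1..2 * n} - insert (2 * n) Y)
                          ({1..2 * n} - ({1..2 * n} - insert (2 * n) X))"
    using strong_min_change_complement[OF J Y] by blast
  then show "strong_min_change ({1..2 * n} - insert (2 * n) Y) (insert (2 * n) X)"
    using X by (simp add: double_diff)
qed

lemma successively_cyclic_nth:
  assumes "successively R xs" and "R (last xs) (hd xs)" and "i < length xs"
  shows "R (xs ! i) (xs ! ((i + 1) mod length xs))"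
proof (cases "Suc i < length xs")
  case True
  then show ?thesis using successively_nth[OF assms(1)] by simp
next
  case False
  then have "i = length xs - 1" and "xs \<noteq> []" using assms(3) by auto
  then show ?thesis using assms(2) by (simp add: last_conv_nth hd_conv_nth)
qed

theorem theorem6:
  fixes n :: nat
  assumes "n \<ge> 1"
  defines "N \<equiv> (2 * n) choose n"
  shows "\<exists>S :: nat \<Rightarrow> nat set.
     bij_betw S {0..<N} {A. A \<subseteq> {1..2*n} \<and> card A = n} \<and>
     (\<forall>i < N div 2. S (i + N div 2) = {1..2*n} - S i) \<and>
     (\<forall>i < N. strong_min_change (S i) (S ((i + 1) mod N)))"
proof -
  define X Y where "X = top_block (2 * n - 1) (n - 1)" and "Y = top_block (n - 1) (n - 1)"
  define H where "H = map (insert (2 * n)) (shift_path (2 * n - 1) (n - 1) n)"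
  define L where "L = H @ map (\<lambda>A. {1..2 * n} - A) H"
  have P: "smc_path (2 * n - 1) (n - 1) X Y (shift_path (2 * n - 1) (n - 1) n)"
    using smc_path_shift_path[of "n - 1" "2 * n - 1" n] assms(1) by (simp add: X_def Y_def)
  have "top_block n n = {1..2 * n} - insert (2 * n) X"
    by (auto simp: top_block_def X_def)
  then have J: "strong_min_change (insert (2 * n) Y) ({1..2 * n} - insert (2 * n) X)"
    using strong_min_change_top_block[of n n "2 * n"] assms(1) by (simp add: Y_def)
  have L: "smc_path (2 * n) n (insert (2 * n) X) ({1..2 * n} - insert (2 * n) Y) L"
    and wrap: "strong_min_change (last L) (hd L)"
    using complementary_smc_path[OF assms(1) P J] by (simp_all add: L_def H_def smc_path_def)
  have len: "length L = N" and half: "N div 2 = length H"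
    using L distinct_card[of L] card_ksubsets[of "2 * n" n] by (auto simp: smc_path_def N_def L_def)
  show ?thesis
  proof (intro exI conjI allI impI)
    show "bij_betw ((!) L) {0..<N} {A. A \<subseteq> {1..2*n} \<and> card A = n}"
      using L len by (intro bij_betw_nth) (auto simp: smc_path_def ksubsets_def)
    show "L ! (i + N div 2) = {1..2*n} - L ! i" if "i < N div 2" for i
      using that by (simp add: half L_def nth_append)
    show "strong_min_change (L ! i) (L ! ((i + 1) mod N))" if "i < N" for i
      using successively_cyclic_nth[of strong_min_change L i] L wrap that len
      by (simp add: smc_path_def)
  qed
qed

end
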